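(* Let $P$ be a finite poset that has a unit mixed interval representation. Then $\dim(P) \le 3$.
   Context: Posets are finite and reflexive. A unit mixed interval representation of $P$ assigns to each element $x$ a real interval $I_x$ of length $1$ of one of the four forms $[a,a+1]$, $(a,a+1)$, $(a,a+1]$, $[a,a+1)$ (different forms may occur for different elements), such that for distinct $x,y$, $x<y$ in $P$ if and only if $I_x$ and $I_y$ are disjoint and every point of $I_x$ is less than every point of $I_y$. The dimension $\dim(P)$ is the minimum number of linear extensions of $P$ whose intersection is $P$ (i.e. $x<y$ in $P$ iff $x<y$ in each of them). *)

theory Defs
  imports "HOL-Analysis.Analysis"
begin

definition unit_interval :: "real \<Rightarrow> bool \<Rightarrow> bool \<Rightarrow> real set" where
  "unit_interval a cl cr =
     {t. (if cl then a \<le> t else a < t) \<and> (if cr then t \<le> a + 1 else t < a + 1)}"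

definition entirely_before :: "real set \<Rightarrow> real set \<Rightarrow> bool" where
  "entirely_before I J \<longleftrightarrow> I \<inter> J = {} \<and> (\<forall>s\<in>I. \<forall>t\<in>J. s < t)"

definition has_unit_mixed_interval_rep :: "'a set \<Rightarrow> 'a rel \<Rightarrow> bool" where
  "has_unit_mixed_interval_rep S r \<longleftrightarrow>
     (\<exists>(a :: 'a \<Rightarrow> real) (cl :: 'a \<Rightarrow> bool) (cr :: 'a \<Rightarrow> bool).
        \<forall>x\<in>S. \<forall>y\<in>S. x \<noteq> y \<longrightarrow>
          ((x, y) \<in> r \<longleftrightarrow>
             entirely_before (unit_interval (a x) (cl x) (cr x)) (unit_interval (a y) (cl y) (cr y))))"

definition linear_extension :: "'a set \<Rightarrow> 'a rel \<Rightarrow> 'a rel \<Rightarrow> bool" where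
  "linear_extension S r L \<longleftrightarrow> linear_order_on S L \<and> r \<subseteq> L"

definition order_dim :: "'a set \<Rightarrow> 'a rel \<Rightarrow> nat" where
  "order_dim S r = (LEAST n. \<exists>\<L>. \<L> \<noteq> {} \<and> finite \<L> \<and> card \<L> = n \<and>
       (\<forall>L\<in>\<L>. linear_extension S r L) \<and> \<Inter>\<L> = r)"

end

theory Submission
  imports Defs "HOL-Library.List_Lexorder"
begin

text \<open>Record each endpoint as a position refined by an infinitesimal offset (open ends are pushed
into the interval); then I_x lies before I_y iff the right end of x is lexicographically below the
left end of y. For p = 0, 1, cut the line into blocks
[2k - p, 2k + 2 - p) and sort by block; inside a block, intervals starting in the first unit cell
are sorted by right end and those starting in the second by left end, so a pair straddling the
middle is compared exactly as in the interval order. The third extension sorts by the unit cell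
of the left end and reverses everything inside a cell. If I_x does not lie before I_y, then either
y starts in an earlier cell or later in the same cell (third extension), or earlier in the same
cell (the first two), or with the same data (the tie-breaks, reversed by the third), or in the
next cell, where the block extension in which both cells form one block puts y first.\<close>

text \<open>The second entry is the infinitesimal offset of the endpoint.\<close>

definition left_end :: "real \<Rightarrow> bool \<Rightarrow> real list" where
  "left_end a cl = [a, if cl then 0 else 1]"

definition right_end :: "real \<Rightarrow> bool \<Rightarrow> real list" where
  "right_end a cr = [a + 1, if cr then 0 else -1]"

lemma entirely_before_unit_interval_iff:
  "entirely_before (unit_interval a cl cr) (unit_interval b dl dr) \<longleftrightarrow> right_end a cr < left_end b dl"
proof
  assume before: "entirely_before (unit_interval a cl cr) (unit_interval b dl dr)"
  show "right_end a cr < left_end b dl"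
  proof (rule ccontr)
    assume "\<not> right_end a cr < left_end b dl"
    then consider "b \<le> a" | "a < b" "b < a + 1" | "b = a + 1" "cr" "dl"
      unfolding right_end_def left_end_def by (cases cr; cases dl) (auto, linarith+)
    then obtain s t where "s \<in> unit_interval a cl cr" "t \<in> unit_interval b dl dr" "t \<le> s"
    proof cases
      case 1
      then show ?thesis by (intro that[of "a + 1/2" "b + 1/2"]) (auto simp: unit_interval_def)
    next
      case 2
      then show ?thesis by (intro that[of "(a + b + 1)/2" "(a + b + 1)/2"]) (auto simp: unit_interval_def)
    next
      case 3
      then show ?thesis by (intro that[of "a + 1" "a + 1"]) (auto simp: unit_interval_def)
    qed
    with before show False by (force simp: entirely_before_def)
  qed
next
  assume "right_end a cr < left_end b dl"
  then have "s < t" if "s \<in> unit_interval a cl cr" "t \<in> unit_interval b dl dr" for s t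
    using that by (auto simp: unit_interval_def right_end_def left_end_def split: if_splits)
  then show "entirely_before (unit_interval a cl cr) (unit_interval b dl dr)"
    by (fastforce simp: entirely_before_def)
qed

text \<open>The entry after the endpoint puts y before x when the closed right end of x meets the
closed left end of y; the last entry breaks all remaining ties.\<close>

definition block_key :: "int \<Rightarrow> real \<Rightarrow> bool \<Rightarrow> bool \<Rightarrow> nat \<Rightarrow> real list" where
  "block_key p a cl cr t = (let n = \<lfloor>a\<rfloor> + p in
     of_int (n div 2) # (if even n then right_end a cr else left_end a cl) @ [if even n then 1 else 0, of_nat t])"

text \<open>Inside a unit cell this reverses the positions and all tie-breaks used by block_key.\<close>

definition cell_key :: "real \<Rightarrow> bool \<Rightarrow> bool \<Rightarrow> nat \<Rightarrow> real list" where
  "cell_key a cl cr t = [of_int \<lfloor>a\<rfloor>, - a, if cr then 0 else 1, if cl then 1 else 0, - of_nat t]"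

lemma last_block_key [simp]: "last (block_key p a cl cr t) = of_nat t"
  by (simp add: block_key_def Let_def)

lemma last_cell_key [simp]: "last (cell_key a cl cr t) = - of_nat t"
  by (simp add: cell_key_def)

lemma div2_less_or_consecutive:
  "(n::int) + 1 \<le> m \<Longrightarrow> n div 2 < m div 2 \<or> even n \<and> m = n + 1"
  by presburger

lemma floor_less_if_right_end_less_left_end:
  "right_end a cr < left_end b dl \<Longrightarrow> \<lfloor>a\<rfloor> < \<lfloor>b\<rfloor>"
  unfolding right_end_def left_end_def by (auto, linarith+)

lemma block_key_less_across_cells_iff:
  assumes "even (\<lfloor>ax\<rfloor> + p)" "\<lfloor>ay\<rfloor> = \<lfloor>ax\<rfloor> + 1"
  shows "block_key p ax clx crx tx < block_key p ay cly cry ty \<longleftrightarrow> right_end ax crx < left_end ay cly"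
proof -
  have "(\<lfloor>ay\<rfloor> + p) div 2 = (\<lfloor>ax\<rfloor> + p) div 2" "odd (\<lfloor>ay\<rfloor> + p)"
    using assms by presburger+
  with assms show ?thesis
    by (auto simp: block_key_def Let_def right_end_def left_end_def)
qed

lemma block_key_less_if_right_end_less_left_end:
  assumes "right_end ax crx < left_end ay cly"
  shows "block_key p ax clx crx tx < block_key p ay cly cry ty"
proof -
  define n where "n = \<lfloor>ax\<rfloor> + p"
  define m where "m = \<lfloor>ay\<rfloor> + p"
  have "n + 1 \<le> m"
    using floor_less_if_right_end_less_left_end[OF assms] by (simp add: n_def m_def)
  then consider "n div 2 < m div 2" | "even n" "m = n + 1"
    using div2_less_or_consecutive by blast
  then show ?thesis
  proof cases
    case 1
    then show ?thesis by (simp add: block_key_def Let_def flip: n_def m_def)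
  next
    case 2
    with assms show ?thesis by (simp add: block_key_less_across_cells_iff n_def m_def)
  qed
qed

lemma cell_key_less_if_right_end_less_left_end:
  "right_end ax crx < left_end ay cly \<Longrightarrow> cell_key ax clx crx tx < cell_key ay cly cry ty"
  using floor_less_if_right_end_less_left_end by (simp add: cell_key_def)

lemma right_end_less_left_end_if_keys_less:
  assumes block0: "block_key 0 ax clx crx tx < block_key 0 ay cly cry ty"
    and block1: "block_key 1 ax clx crx tx < block_key 1 ay cly cry ty"
    and cell: "cell_key ax clx crx tx < cell_key ay cly cry ty"
  shows "right_end ax crx < left_end ay cly"
proof (rule ccontr)
  assume not_before: "\<not> right_end ax crx < left_end ay cly"
  then have "ay \<le> ax + 1"
    by (auto simp: right_end_def left_end_def)
  then have "\<lfloor>ay\<rfloor> \<le> \<lfloor>ax\<rfloor> + 1"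
    by (metis floor_add_int floor_mono of_int_1)
  moreover have "\<lfloor>ax\<rfloor> \<le> \<lfloor>ay\<rfloor>"
    using cell by (auto simp: cell_key_def)
  ultimately consider "\<lfloor>ay\<rfloor> = \<lfloor>ax\<rfloor> + 1" | "\<lfloor>ay\<rfloor> = \<lfloor>ax\<rfloor>"
    by linarith
  then show False
  proof cases
    case 1
    show False
    proof (cases "even \<lfloor>ax\<rfloor>")
      case True
      with 1 block0 not_before show False
        using block_key_less_across_cells_iff[of ax 0] by simp
    next
      case False
      with 1 block1 not_before show False
        using block_key_less_across_cells_iff[of ax 1] by simp
    qed
  next
    case 2
    with block0 block1 cell show False
      by (cases "even \<lfloor>ax\<rfloor>")
        (auto simp: block_key_def cell_key_def right_end_def left_end_def split: if_splits)
  qed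
qed

lemma right_end_less_left_end_iff_keys_less:
  "right_end ax crx < left_end ay cly \<longleftrightarrow>
     block_key 0 ax clx crx tx < block_key 0 ay cly cry ty \<and>
     block_key 1 ax clx crx tx < block_key 1 ay cly cry ty \<and>
     cell_key ax clx crx tx < cell_key ay cly cry ty"
  by (meson block_key_less_if_right_end_less_left_end cell_key_less_if_right_end_less_left_end
    right_end_less_left_end_if_keys_less)

definition key_order :: "'a set \<Rightarrow> ('a \<Rightarrow> 'b::linorder) \<Rightarrow> 'a rel" where
  "key_order S k = {(x, y). x \<in> S \<and> y \<in> S \<and> k x \<le> k y}"

lemma linear_order_on_key_order:
  "inj_on k S \<Longrightarrow> linear_order_on S (key_order S k)"
  unfolding key_order_def linear_order_on_def partial_order_on_def preorder_on_def refl_on_def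
    trans_on_def antisym_on_def total_on_def
  by (auto dest: inj_onD)

lemma order_dim_le_card:
  assumes "\<L> \<noteq> {}" "finite \<L>" "\<forall>L\<in>\<L>. linear_extension S r L" "\<Inter>\<L> = r"
  shows "order_dim S r \<le> card \<L>"
  unfolding order_dim_def by (rule Least_le) (use assms in blast)

lemma order_dim_le_card_keys:
  fixes K :: "('a \<Rightarrow> 'b::linorder) set"
  assumes order: "partial_order_on S r"
    and K: "finite K" "K \<noteq> {}" "\<forall>k\<in>K. inj_on k S"
    and realizes: "\<And>x y. x \<in> S \<Longrightarrow> y \<in> S \<Longrightarrow> x \<noteq> y \<Longrightarrow> (x, y) \<in> r \<longleftrightarrow> (\<forall>k\<in>K. k x < k y)"
  shows "order_dim S r \<le> card K"
proof -
  have r_on_S: "r \<subseteq> S \<times> S" and refl: "\<And>x. x \<in> S \<Longrightarrow> (x, x) \<in> r"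
    using order by (auto simp: partial_order_on_def preorder_on_def refl_on_def)
  have le_if_r: "k x \<le> k y" if "k \<in> K" "(x, y) \<in> r" for k x y
    using that r_on_S realizes[of x y] by (cases "x = y") (auto intro: less_imp_le)
  have r_if_le: "(x, y) \<in> r" if "x \<in> S" "y \<in> S" "\<forall>k\<in>K. k x \<le> k y" for x y
  proof (cases "x = y")
    case False
    with that K(3) have "\<forall>k\<in>K. k x < k y"
      by (metis inj_onD order_less_le)
    with that False realizes show ?thesis by blast
  qed (use that refl in simp)
  have "r \<subseteq> key_order S k" if "k \<in> K" for k
    using that r_on_S le_if_r by (auto simp: key_order_def)
  then have extensions: "\<forall>L \<in> key_order S ` K. linear_extension S r L"
    using K(3) by (auto simp: linear_extension_def linear_order_on_key_order)
  have "\<Inter> (key_order S ` K) = r"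
    using K(2) r_on_S le_if_r r_if_le by (auto simp: key_order_def)
  then have "order_dim S r \<le> card (key_order S ` K)"
    using K extensions by (intro order_dim_le_card) auto
  also have "\<dots> \<le> card K"
    using K(1) by (rule card_image_le)
  finally show ?thesis .
qed

theorem mainTheorem4:
  fixes S :: "'a set" and r :: "'a rel"
  assumes "finite S"
    and "partial_order_on S r"
    and "has_unit_mixed_interval_rep S r"
  shows "order_dim S r \<le> 3"
proof -
  obtain a cl cr where rep: "\<And>x y. x \<in> S \<Longrightarrow> y \<in> S \<Longrightarrow> x \<noteq> y \<Longrightarrow>
      (x, y) \<in> r \<longleftrightarrow> right_end (a x) (cr x) < left_end (a y) (cl y)"
    using assms(3) by (auto simp: has_unit_mixed_interval_rep_def entirely_before_unit_interval_iff)
  obtain t :: "'a \<Rightarrow> nat" where t: "inj_on t S"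
    using finite_imp_inj_to_nat_seg[OF assms(1)] by blast
  define K where "K = {\<lambda>x. block_key 0 (a x) (cl x) (cr x) (t x),
    \<lambda>x. block_key 1 (a x) (cl x) (cr x) (t x), \<lambda>x. cell_key (a x) (cl x) (cr x) (t x)}"
  have "order_dim S r \<le> card K"
  proof (rule order_dim_le_card_keys[OF assms(2)])
    have "inj_on (last \<circ> k) S" if "k \<in> K" for k
      using t that by (auto simp: K_def inj_on_def)
    then show "\<forall>k\<in>K. inj_on k S"
      using inj_on_imageI2 by blast
    show "(x, y) \<in> r \<longleftrightarrow> (\<forall>k\<in>K. k x < k y)" if "x \<in> S" "y \<in> S" "x \<noteq> y" for x y
      using rep[OF that] right_end_less_left_end_iff_keys_less by (simp add: K_def)
  qed (simp_all add: K_def)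
  also have "\<dots> \<le> 3"
    by (simp add: K_def card_insert_if)
  finally show ?thesis .
qed

end
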